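(* With $w_1=\alpha A+bC$, $u=\alpha B+bD$, $w_2=\delta D+cB$, $v=cA+\delta C$ (the entries of $\Omega=\mathsf dT\,T^{-1}$, where $T^{-1}=\begin{pmatrix}A&B\\C&D\end{pmatrix}$), the following hold in $\Gamma$: $w_1u=uw_1-2hu^2$, $w_2u=uw_2$, $w_1v=vw_1+2h(w_1w_2-uv)$, $w_2v=vw_2$, $w_1w_2=-w_2w_1-2huw_2$, $w_1^2=-2huw_1$, $w_2^2=0$, $uv=vu-2huw_2$. Moreover $\mathcal D_h=ad^{-1}-\beta d^{-1}\gamma d^{-1}$ and $\hat{\mathcal D}=bc^{-1}-\alpha c^{-1}\delta c^{-1}$ commute with $w_1,w_2,u,v$.
   Context: Let $h$ be an odd (Grassmann) parameter with $h^2=0$; even elements commute with everything and odd elements anticommute with each other. $\mathcal A$ is the $\mathbb Z_2$-graded algebra generated by even invertible $a,d$ and odd $\beta,\gamma$ ($h$ commuting with $a,d$, anticommuting with $\beta,\gamma$) subject to $a\beta=\beta a$, $a\gamma=\gamma a+h a^2(1-\mathcal D_h^{-1})$, $d\beta=\beta d$, $d\gamma=\gamma d+h d^2(\mathcal D_h-1)$, $\beta^2=0$, $\gamma^2=h\gamma d(1-\mathcal D_h)$, $\beta\gamma=-\gamma\beta+h\beta d(1-\mathcal D_h)$, $ad=da+h\beta d(\mathcal D_h-1)$, with $\mathcal D_h=ad^{-1}-\beta d^{-1}\gamma d^{-1}$; $T=\begin{pmatrix}a&\beta\\ \gamma&d\end{pmatrix}$ and $T^{-1}=\begin{pmatrix}a^{-1}+a^{-1}\beta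 d^{-1}\gamma a^{-1}&-a^{-1}\beta d^{-1}\\ -d^{-1}\gamma a^{-1}& d^{-1}+d^{-1}\gamma a^{-1}\beta d^{-1}\end{pmatrix}$. The differential algebra $\Gamma$ is the $\mathbb Z_2$-graded algebra generated by $\mathcal A$ together with odd elements $\alpha=\mathsf da,\ \delta=\mathsf dd$ and even elements $b=\mathsf d\beta,\ c=\mathsf d\gamma$ ($c$ invertible; $h$ anticommutes with $\alpha,\delta$), where $\mathsf d$ is an odd map with $\mathsf d^2=0$, graded Leibniz rule and $\mathsf dh=-h\mathsf d$, subject to the relations $a\alpha=\alpha a+h(\alpha\beta-ba)$, $ab=ba-hb\beta$, $ac=ca+h(\alpha a-c\beta+\delta a)$, $a\delta=\delta a+h(ba+\delta\beta)$; $\beta\alpha=-\alpha\beta+hb\beta$, $\beta b=b\beta$, $\beta c=c\beta+h(\alpha+\delta)\beta$, $\beta\delta=-\delta\beta-hb\beta$; $\gamma\alpha=-\alpha\gamma+h(\alpha a+\alpha d+b\gamma)$, $\gamma b=b\gamma+hb(a+d)$, $\gamma c=c\gamma+h(\alpha\gamma+ca+cd+\delta\gamma)$, $\gamma\delta=-\delta\gamma+h(\delta a+\delta d-b\gamma)$; $d\alpha=\alpha d-h(\alpha\beta+bd)$, $db=bd+hb\beta$, $dc=cd+h(\alpha d+c\beta+\delta d)$, $d\delta=\delta d+h(bd-\delta\beta)$; and $\alpha b=b\alpha+hb^2$, $\alpha c=c\alpha+h(cb+\delta\alpha)$, $\delta b=b\delta-hb^2$, $\delta c=c\delta-h(cb-\alpha\delta)$,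 $\alpha^2=h\alpha b$, $\alpha\delta=-\delta\alpha+h(\delta-\alpha)b$, $\delta^2=-h\delta b$, $bc=cb+h(\delta+\alpha)b$. *)

theory Defs
  imports Complex_Main
begin

end

theory Submission
  imports Defs
begin

text \<open>The defining relations of \<open>\<Gamma>\<close> form a rewriting system that brings every product of
  generators into the order \<open>c < b < \<delta> < \<alpha> < \<gamma> < \<beta> < d < a\<close> (inverses next to their
  elements, \<open>h\<close> in front), each rewrite producing a correction that is a multiple of \<open>h\<close>.
  Expanding both sides of an identity in the generators and normal-ordering them decides it.
  Since \<open>h\<^sup>2 = 0\<close>, corrections of corrections vanish, so the \<open>h\<close>-free part and the
  first-order correction can be normal-ordered one after the other.
  The one relation leaving the generators is that for \<open>a \<gamma>\<close>, through \<open>Dh\<^sup>-\<^sup>1\<close>. As it only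
  occurs multiplied by \<open>h\<close>, \<open>Dh\<^sup>-\<^sup>1\<close> may there be replaced by the inverse of \<open>Dh\<close> modulo \<open>h\<close>,
  namely \<open>d a\<^sup>-\<^sup>1 - \<gamma> \<beta> a\<^sup>-\<^sup>2\<close>.\<close>

lemma mult_left_commute_plus:
  fixes x y z Q :: "'a::ring"
  assumes "y * x = x * y + Q"
  shows "y * (x * z) = x * (y * z) + Q * z"
  by (metis assms distrib_right mult.assoc)

lemma mult_left_anticommute_plus:
  fixes x y z Q :: "'a::ring"
  assumes "y * x = - (x * y) + Q"
  shows "y * (x * z) = - (x * (y * z)) + Q * z"
  by (metis assms distrib_right mult.assoc mult_minus_left)

lemma left_inverse_commute_plus:
  fixes x xi y Q :: "'a::ring_1"
  assumes "x * y = y * x + Q" and "x * xi = 1" and "xi * x = 1"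
  shows "xi * y = y * xi - xi * Q * xi"
proof -
  have "y * xi = xi * (x * y) * xi"
    using assms(3) by (simp flip: mult.assoc)
  also have "\<dots> = xi * (y * x + Q) * xi"
    using assms(1) by simp
  also have "\<dots> = xi * y + xi * Q * xi"
    using assms(2) by (simp add: ring_distribs mult.assoc)
  finally show ?thesis
    by (simp add: algebra_simps)
qed

lemma right_inverse_commute_plus:
  fixes x y yi Q :: "'a::ring_1"
  assumes "x * y = y * x + Q" and "y * yi = 1" and "yi * y = 1"
  shows "x * yi = yi * x - yi * Q * yi"
proof -
  have "yi * x = yi * (x * y) * yi"
    using assms(2) by (simp add: mult.assoc)
  also have "\<dots> = yi * (y * x + Q) * yi"
    using assms(1) by simp
  also have "\<dots> = x * yi + yi * Q * yi"
    using assms(3) by (simp add: ring_distribs flip: mult.assoc)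
  finally show ?thesis
    by (simp add: algebra_simps)
qed

lemma commute_imp_commute_inverse:
  fixes x y yi :: "'a::ring_1"
  assumes "x * y = y * x" and "y * yi = 1" and "yi * y = 1"
  shows "x * yi = yi * x"
  using right_inverse_commute_plus[of x y 0 yi] assms by simp

lemma left_inverse_reorder:
  fixes x xi y h R :: "'a::ring_1"
  assumes "x * y = y * x + h * R" and "x * xi = 1" and "xi * x = 1" and "h * xi = xi * h"
  shows "xi * y = y * xi + h * (- (xi * R * xi))"
proof -
  have "xi * (h * R) * xi = h * (xi * R * xi)"
    using assms(4) by (metis mult.assoc)
  then show ?thesis
    using left_inverse_commute_plus[OF assms(1-3)] by simp
qed

lemma right_inverse_reorder:
  fixes x y yi h R :: "'a::ring_1"
  assumes "x * y = y * x + h * R" and "y * yi = 1" and "yi * y = 1" and "h * yi = yi * h"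
  shows "x * yi = yi * x + h * (- (yi * R * yi))"
proof -
  have "yi * (h * R) * yi = h * (yi * R * yi)"
    using assms(4) by (metis mult.assoc)
  then show ?thesis
    using right_inverse_commute_plus[OF assms(1-3)] by simp
qed

locale Gamma_algebra =
  fixes h a d \<beta> \<gamma> \<alpha> \<delta> b c ai di ci Dh Dhi :: "'r :: ring_1"
  assumes inv_a: "a * ai = 1" "ai * a = 1"
      and inv_d: "d * di = 1" "di * d = 1"
      and inv_c: "c * ci = 1" "ci * c = 1"
      and Dh_def: "Dh = a * di - \<beta> * di * \<gamma> * di"
      and inv_Dh: "Dh * Dhi = 1" "Dhi * Dh = 1"
      and h_rels: "h * h = 0" "h * a = a * h" "h * d = d * h" "h * b = b * h" "h * c = c * h"
                  "h * \<beta> = - (\<beta> * h)" "h * \<gamma> = - (\<gamma> * h)"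
                  "h * \<alpha> = - (\<alpha> * h)" "h * \<delta> = - (\<delta> * h)"
      and A_rels:
        "a * \<beta> = \<beta> * a"
        "a * \<gamma> = \<gamma> * a + h * a^2 * (1 - Dhi)"
        "d * \<beta> = \<beta> * d"
        "d * \<gamma> = \<gamma> * d + h * d^2 * (Dh - 1)"
        "\<beta> * \<beta> = 0"
        "\<gamma> * \<gamma> = h * \<gamma> * d * (1 - Dh)"
        "\<beta> * \<gamma> = - (\<gamma> * \<beta>) + h * \<beta> * d * (1 - Dh)"
        "a * d = d * a + h * \<beta> * d * (Dh - 1)"
      and rels_a:
        "a * \<alpha> = \<alpha> * a + h * (\<alpha> * \<beta> - b * a)"
        "a * b = b * a - h * b * \<beta>"
        "a * c = c * a + h * (\<alpha> * a - c * \<beta> + \<delta> * a)"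
        "a * \<delta> = \<delta> * a + h * (b * a + \<delta> * \<beta>)"
      and rels_beta:
        "\<beta> * \<alpha> = - (\<alpha> * \<beta>) + h * b * \<beta>"
        "\<beta> * b = b * \<beta>"
        "\<beta> * c = c * \<beta> + h * (\<alpha> + \<delta>) * \<beta>"
        "\<beta> * \<delta> = - (\<delta> * \<beta>) - h * b * \<beta>"
      and rels_gamma:
        "\<gamma> * \<alpha> = - (\<alpha> * \<gamma>) + h * (\<alpha> * a + \<alpha> * d + b * \<gamma>)"
        "\<gamma> * b = b * \<gamma> + h * b * (a + d)"
        "\<gamma> * c = c * \<gamma> + h * (\<alpha> * \<gamma> + c * a + c * d + \<delta> * \<gamma>)"
        "\<gamma> * \<delta> = - (\<delta> * \<gamma>) + h * (\<delta> * a + \<delta> * d - b * \<gamma>)"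
      and rels_d:
        "d * \<alpha> = \<alpha> * d - h * (\<alpha> * \<beta> + b * d)"
        "d * b = b * d + h * b * \<beta>"
        "d * c = c * d + h * (\<alpha> * d + c * \<beta> + \<delta> * d)"
        "d * \<delta> = \<delta> * d + h * (b * d - \<delta> * \<beta>)"
      and rels_diff:
        "\<alpha> * b = b * \<alpha> + h * b^2"
        "\<alpha> * c = c * \<alpha> + h * (c * b + \<delta> * \<alpha>)"
        "\<delta> * b = b * \<delta> - h * b^2"
        "\<delta> * c = c * \<delta> - h * (c * b - \<alpha> * \<delta>)"
        "\<alpha> * \<alpha> = h * \<alpha> * b"
        "\<alpha> * \<delta> = - (\<delta> * \<alpha>) + h * (\<delta> - \<alpha>) * b"
        "\<delta> * \<delta> = - (h * \<delta> * b)"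
        "b * c = c * b + h * (\<delta> + \<alpha>) * b"
begin

text \<open>\<open>hcorr z\<close> marks a first-order correction \<open>h * z\<close>. The congruence rule stops the
  simplifier from rewriting inside the marker, so corrections are normal-ordered only in a second
  pass, where every correction of a correction is generated next to a factor \<open>h\<close> and vanishes.\<close>

definition hcorr :: "'r \<Rightarrow> 'r" where "hcorr z = h * z"

lemma hcorr_cong [cong]: "hcorr z = hcorr z" ..

lemma reorder_commute:
  assumes "y * x = x * y + h * R"
  shows "y * x = x * y + hcorr R" and "y * (x * z) = x * (y * z) + hcorr (R * z)"
  using assms mult_left_commute_plus[OF assms] by (simp_all add: hcorr_def mult.assoc)

lemma reorder_anticommute:
  assumes "y * x = - (x * y) + h * R"
  shows "y * x = - (x * y) + hcorr R" and "y * (x * z) = - (x * (y * z)) + hcorr (R * z)"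
  using assms mult_left_anticommute_plus[OF assms] by (simp_all add: hcorr_def mult.assoc)

lemma reorder_square:
  assumes "y * y = h * R"
  shows "y * y = hcorr R" and "y * (y * z) = hcorr (R * z)"
  using assms by (simp_all add: hcorr_def flip: mult.assoc)

lemma h_commute_moves:
  assumes "h * g = g * h"
  shows "g * h = h * g" and "g * (h * z) = h * (g * z)" and "g * hcorr z = hcorr (g * z)"
  using assms by (simp_all add: hcorr_def flip: mult.assoc)

lemma h_anticommute_moves:
  assumes "h * g = - (g * h)"
  shows "g * h = - (h * g)" and "g * (h * z) = - (h * (g * z))"
    and "g * hcorr z = - hcorr (g * z)"
  using assms by (simp_all add: hcorr_def flip: mult.assoc)

lemma hcorr_simps:
  "h * h = 0" "h * (h * z) = 0" "h * hcorr z = 0" "hcorr z * w = hcorr (z * w)" "hcorr 0 = 0"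
  using h_rels(1) by (simp_all add: hcorr_def flip: mult.assoc)

lemma inverse_simps:
  "a * ai = 1" "ai * a = 1" "d * di = 1" "di * d = 1" "c * ci = 1" "ci * c = 1"
  "a * (ai * z) = z" "ai * (a * z) = z" "d * (di * z) = z" "di * (d * z) = z"
  "c * (ci * z) = z" "ci * (c * z) = z"
  using inv_a inv_d inv_c by (simp_all flip: mult.assoc)

lemma h_commute_inverses: "h * ai = ai * h" "h * di = di * h" "h * ci = ci * h"
  using commute_imp_commute_inverse[OF h_rels(2) inv_a]
    commute_imp_commute_inverse[OF h_rels(3) inv_d]
    commute_imp_commute_inverse[OF h_rels(5) inv_c] .

lemmas h_to_front =
  h_commute_moves[OF h_rels(2)] h_commute_moves[OF h_rels(3)]
  h_commute_moves[OF h_rels(4)] h_commute_moves[OF h_rels(5)]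
  h_commute_moves[OF h_commute_inverses(1)] h_commute_moves[OF h_commute_inverses(2)]
  h_commute_moves[OF h_commute_inverses(3)]
  h_anticommute_moves[OF h_rels(6)] h_anticommute_moves[OF h_rels(7)]
  h_anticommute_moves[OF h_rels(8)] h_anticommute_moves[OF h_rels(9)]

text \<open>Relations without correction are written with \<open>h * 0\<close>, so that all of them have the
  shape expected by the reordering lemmas.\<close>

lemma commutation_relations:
  shows a_beta: "a * \<beta> = \<beta> * a + h * 0"
    and d_beta: "d * \<beta> = \<beta> * d + h * 0"
    and d_gamma: "d * \<gamma> = \<gamma> * d + h * (d^2 * (Dh - 1))"
    and a_d: "a * d = d * a + h * (\<beta> * d * (Dh - 1))"
    and a_alpha: "a * \<alpha> = \<alpha> * a + h * (\<alpha> * \<beta> - b * a)"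
    and a_b: "a * b = b * a + h * (- (b * \<beta>))"
    and a_c: "a * c = c * a + h * (\<alpha> * a - c * \<beta> + \<delta> * a)"
    and a_delta: "a * \<delta> = \<delta> * a + h * (b * a + \<delta> * \<beta>)"
    and beta_b: "\<beta> * b = b * \<beta> + h * 0"
    and beta_c: "\<beta> * c = c * \<beta> + h * ((\<alpha> + \<delta>) * \<beta>)"
    and gamma_b: "\<gamma> * b = b * \<gamma> + h * (b * (a + d))"
    and gamma_c: "\<gamma> * c = c * \<gamma> + h * (\<alpha> * \<gamma> + c * a + c * d + \<delta> * \<gamma>)"
    and d_alpha: "d * \<alpha> = \<alpha> * d + h * (- (\<alpha> * \<beta> + b * d))"
    and d_b: "d * b = b * d + h * (b * \<beta>)"
    and d_c: "d * c = c * d + h * (\<alpha> * d + c * \<beta> + \<delta> * d)"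
    and d_delta: "d * \<delta> = \<delta> * d + h * (b * d - \<delta> * \<beta>)"
    and alpha_b: "\<alpha> * b = b * \<alpha> + h * (b^2)"
    and alpha_c: "\<alpha> * c = c * \<alpha> + h * (c * b + \<delta> * \<alpha>)"
    and delta_b: "\<delta> * b = b * \<delta> + h * (- (b^2))"
    and delta_c: "\<delta> * c = c * \<delta> + h * (- (c * b - \<alpha> * \<delta>))"
    and b_c: "b * c = c * b + h * ((\<delta> + \<alpha>) * b)"
  using A_rels rels_a rels_beta rels_gamma rels_d rels_diff
  by (simp_all (no_asm_use) only: mult.assoc diff_conv_add_uminus mult_minus_right
      mult_zero_right add_0_right)

lemma anticommutation_relations:
  shows beta_gamma: "\<beta> * \<gamma> = - (\<gamma> * \<beta>) + h * (\<beta> * d * (1 - Dh))"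
    and beta_alpha: "\<beta> * \<alpha> = - (\<alpha> * \<beta>) + h * (b * \<beta>)"
    and beta_delta: "\<beta> * \<delta> = - (\<delta> * \<beta>) + h * (- (b * \<beta>))"
    and gamma_alpha: "\<gamma> * \<alpha> = - (\<alpha> * \<gamma>) + h * (\<alpha> * a + \<alpha> * d + b * \<gamma>)"
    and gamma_delta: "\<gamma> * \<delta> = - (\<delta> * \<gamma>) + h * (\<delta> * a + \<delta> * d - b * \<gamma>)"
    and alpha_delta: "\<alpha> * \<delta> = - (\<delta> * \<alpha>) + h * ((\<delta> - \<alpha>) * b)"
  using A_rels rels_beta rels_gamma rels_diff
  by (simp_all (no_asm_use) only: mult.assoc diff_conv_add_uminus mult_minus_right)

lemma square_relations:
  shows beta_beta: "\<beta> * \<beta> = h * 0"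
    and gamma_gamma: "\<gamma> * \<gamma> = h * (\<gamma> * d * (1 - Dh))"
    and alpha_alpha: "\<alpha> * \<alpha> = h * (\<alpha> * b)"
    and delta_delta: "\<delta> * \<delta> = h * (- (\<delta> * b))"
  using A_rels rels_diff
  by (simp_all (no_asm_use) only: mult.assoc mult_minus_right mult_zero_right)

lemma a_gamma_Dhi: "a * \<gamma> = \<gamma> * a + h * (a^2 * (1 - Dhi))"
  using A_rels(2) by (simp only: mult.assoc)

lemmas a_ci = a_c[THEN right_inverse_reorder, OF inv_c h_commute_inverses(3)]
lemmas d_ci = d_c[THEN right_inverse_reorder, OF inv_c h_commute_inverses(3)]
lemmas a_di = a_d[THEN right_inverse_reorder, OF inv_d h_commute_inverses(2)]

lemmas c_right_relations = b_c delta_c alpha_c gamma_c beta_c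
lemmas d_left_relations = d_c d_b d_delta d_alpha d_gamma d_beta d_ci
lemmas a_left_relations = a_c a_b a_delta a_alpha a_beta a_d a_ci a_di

lemmas ci_right_relations =
  c_right_relations[THEN right_inverse_reorder, OF inv_c h_commute_inverses(3)]
lemmas di_left_relations =
  d_left_relations[THEN left_inverse_reorder, OF inv_d h_commute_inverses(2)]
lemmas ai_left_relations =
  a_left_relations[THEN left_inverse_reorder, OF inv_a h_commute_inverses(1)]

lemmas inverse_relations =
  a_ci d_ci a_di ci_right_relations di_left_relations ai_left_relations

lemmas normal_order_simps_without_a_gamma =
  mult.assoc ring_distribs power2_eq_square mult_2
  hcorr_simps inverse_simps h_to_front
  commutation_relations[THEN reorder_commute(1)] commutation_relations[THEN reorder_commute(2)]
  inverse_relations[THEN reorder_commute(1)] inverse_relations[THEN reorder_commute(2)]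
  anticommutation_relations[THEN reorder_anticommute(1)]
  anticommutation_relations[THEN reorder_anticommute(2)]
  square_relations[THEN reorder_square(1)] square_relations[THEN reorder_square(2)]

lemmas ai_gamma_Dhi = a_gamma_Dhi[THEN left_inverse_reorder, OF inv_a h_commute_inverses(1)]

lemma h_mult_Dhi: "h * Dhi = h * (d * ai - \<gamma> * \<beta> * ai * ai)"
proof -
  have "h * ((d * ai - \<gamma> * \<beta> * ai * ai) * Dh) = h"
    unfolding Dh_def
    by (simp add: normal_order_simps_without_a_gamma
        a_gamma_Dhi[THEN reorder_commute(1)] a_gamma_Dhi[THEN reorder_commute(2)]
        ai_gamma_Dhi[THEN reorder_commute(1)] ai_gamma_Dhi[THEN reorder_commute(2)])
  then have "h * Dhi = h * ((d * ai - \<gamma> * \<beta> * ai * ai) * Dh) * Dhi"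
    by simp
  also have "\<dots> = h * (d * ai - \<gamma> * \<beta> * ai * ai)"
    using inv_Dh by (simp add: mult.assoc)
  finally show ?thesis .
qed

lemma a_gamma: "a * \<gamma> = \<gamma> * a + h * (a^2 * (1 - (d * ai - \<gamma> * \<beta> * ai * ai)))"
proof -
  have "h * (a^2 * Dhi) = h * (a^2 * (d * ai - \<gamma> * \<beta> * ai * ai))"
    using h_mult_Dhi h_rels(2) by (metis mult.assoc power2_eq_square)
  then show ?thesis
    using a_gamma_Dhi by (simp add: right_diff_distrib)
qed

lemmas ai_gamma = a_gamma[THEN left_inverse_reorder, OF inv_a h_commute_inverses(1)]

lemmas normal_order_simps = normal_order_simps_without_a_gamma
  a_gamma[THEN reorder_commute(1)] a_gamma[THEN reorder_commute(2)]
  ai_gamma[THEN reorder_commute(1)] ai_gamma[THEN reorder_commute(2)]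

definition Tinv11 where "Tinv11 = ai + ai * \<beta> * di * \<gamma> * ai"
definition Tinv12 where "Tinv12 = - (ai * \<beta> * di)"
definition Tinv21 where "Tinv21 = - (di * \<gamma> * ai)"
definition Tinv22 where "Tinv22 = di + di * \<gamma> * ai * \<beta> * di"

definition Omega11 where "Omega11 = \<alpha> * Tinv11 + b * Tinv21"
definition Omega12 where "Omega12 = \<alpha> * Tinv12 + b * Tinv22"
definition Omega21 where "Omega21 = c * Tinv11 + \<delta> * Tinv21"
definition Omega22 where "Omega22 = \<delta> * Tinv22 + c * Tinv12"

definition D_hat where "D_hat = b * ci - \<alpha> * ci * \<delta> * ci"

lemmas Omega_defs = Omega11_def Omega12_def Omega21_def Omega22_def
  Tinv11_def Tinv12_def Tinv21_def Tinv22_def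

lemma Omega_relations:
  shows Omega11_Omega12: "Omega11 * Omega12 = Omega12 * Omega11 - 2 * h * Omega12^2"
    and Omega22_Omega12: "Omega22 * Omega12 = Omega12 * Omega22"
    and Omega11_Omega21:
      "Omega11 * Omega21 = Omega21 * Omega11 + 2 * h * (Omega11 * Omega22 - Omega12 * Omega21)"
    and Omega22_Omega21: "Omega22 * Omega21 = Omega21 * Omega22"
    and Omega11_Omega22: "Omega11 * Omega22 = - (Omega22 * Omega11) - 2 * h * Omega12 * Omega22"
    and Omega11_Omega11: "Omega11 * Omega11 = - (2 * h * Omega12 * Omega11)"
    and Omega22_Omega22: "Omega22 * Omega22 = 0"
    and Omega12_Omega21: "Omega12 * Omega21 = Omega21 * Omega12 - 2 * h * Omega12 * Omega22"
  unfolding Omega_defs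
  by (simp_all add: normal_order_simps add_ac, unfold hcorr_def,
      simp_all add: normal_order_simps Dh_def add_ac)

lemma Dh_D_hat_commute_Omega:
  shows "Dh * Omega11 = Omega11 * Dh"
    and "Dh * Omega12 = Omega12 * Dh"
    and "Dh * Omega21 = Omega21 * Dh"
    and "Dh * Omega22 = Omega22 * Dh"
    and "D_hat * Omega11 = Omega11 * D_hat"
    and "D_hat * Omega12 = Omega12 * D_hat"
    and "D_hat * Omega21 = Omega21 * D_hat"
    and "D_hat * Omega22 = Omega22 * D_hat"
  unfolding Omega_defs D_hat_def Dh_def
  by (simp_all add: normal_order_simps add_ac, unfold hcorr_def,
      simp_all add: normal_order_simps Dh_def add_ac)

end

theorem mainTheorem9:
  fixes h a d \<beta> \<gamma> \<alpha> \<delta> b c ai di ci Dh Dhi A B C D w1 w2 u v Dhat :: "'r :: real_algebra_1"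
  assumes inv_a: "a * ai = 1" "ai * a = 1"
      and inv_d: "d * di = 1" "di * d = 1"
      and inv_c: "c * ci = 1" "ci * c = 1"
      and Dh_def: "Dh = a * di - \<beta> * di * \<gamma> * di"
      and inv_Dh: "Dh * Dhi = 1" "Dhi * Dh = 1"
      and h_rels: "h * h = 0" "h * a = a * h" "h * d = d * h" "h * b = b * h" "h * c = c * h"
                  "h * \<beta> = - (\<beta> * h)" "h * \<gamma> = - (\<gamma> * h)"
                  "h * \<alpha> = - (\<alpha> * h)" "h * \<delta> = - (\<delta> * h)"
      and A_rels:
        "a * \<beta> = \<beta> * a"
        "a * \<gamma> = \<gamma> * a + h * a^2 * (1 - Dhi)"
        "d * \<beta> = \<beta> * d"
        "d * \<gamma> = \<gamma> * d + h * d^2 * (Dh - 1)"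
        "\<beta> * \<beta> = 0"
        "\<gamma> * \<gamma> = h * \<gamma> * d * (1 - Dh)"
        "\<beta> * \<gamma> = - (\<gamma> * \<beta>) + h * \<beta> * d * (1 - Dh)"
        "a * d = d * a + h * \<beta> * d * (Dh - 1)"
      and rels_a:
        "a * \<alpha> = \<alpha> * a + h * (\<alpha> * \<beta> - b * a)"
        "a * b = b * a - h * b * \<beta>"
        "a * c = c * a + h * (\<alpha> * a - c * \<beta> + \<delta> * a)"
        "a * \<delta> = \<delta> * a + h * (b * a + \<delta> * \<beta>)"
      and rels_beta:
        "\<beta> * \<alpha> = - (\<alpha> * \<beta>) + h * b * \<beta>"
        "\<beta> * b = b * \<beta>"
        "\<beta> * c = c * \<beta> + h * (\<alpha> + \<delta>) * \<beta>"
        "\<beta> * \<delta> = - (\<delta> * \<beta>) - h * b * \<beta>"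
      and rels_gamma:
        "\<gamma> * \<alpha> = - (\<alpha> * \<gamma>) + h * (\<alpha> * a + \<alpha> * d + b * \<gamma>)"
        "\<gamma> * b = b * \<gamma> + h * b * (a + d)"
        "\<gamma> * c = c * \<gamma> + h * (\<alpha> * \<gamma> + c * a + c * d + \<delta> * \<gamma>)"
        "\<gamma> * \<delta> = - (\<delta> * \<gamma>) + h * (\<delta> * a + \<delta> * d - b * \<gamma>)"
      and rels_d:
        "d * \<alpha> = \<alpha> * d - h * (\<alpha> * \<beta> + b * d)"
        "d * b = b * d + h * b * \<beta>"
        "d * c = c * d + h * (\<alpha> * d + c * \<beta> + \<delta> * d)"
        "d * \<delta> = \<delta> * d + h * (b * d - \<delta> * \<beta>)"
      and rels_diff:
        "\<alpha> * b = b * \<alpha> + h * b^2"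
        "\<alpha> * c = c * \<alpha> + h * (c * b + \<delta> * \<alpha>)"
        "\<delta> * b = b * \<delta> - h * b^2"
        "\<delta> * c = c * \<delta> - h * (c * b - \<alpha> * \<delta>)"
        "\<alpha> * \<alpha> = h * \<alpha> * b"
        "\<alpha> * \<delta> = - (\<delta> * \<alpha>) + h * (\<delta> - \<alpha>) * b"
        "\<delta> * \<delta> = - (h * \<delta> * b)"
        "b * c = c * b + h * (\<delta> + \<alpha>) * b"
      and Tinv:
        "A = ai + ai * \<beta> * di * \<gamma> * ai"
        "B = - (ai * \<beta> * di)"
        "C = - (di * \<gamma> * ai)"
        "D = di + di * \<gamma> * ai * \<beta> * di"
      and Omega:
        "w1 = \<alpha> * A + b * C"
        "u = \<alpha> * B + b * D"
        "w2 = \<delta> * D + c * B"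
        "v = c * A + \<delta> * C"
      and Dhat_def: "Dhat = b * ci - \<alpha> * ci * \<delta> * ci"
  shows "w1 * u = u * w1 - 2 * h * u^2
       \<and> w2 * u = u * w2
       \<and> w1 * v = v * w1 + 2 * h * (w1 * w2 - u * v)
       \<and> w2 * v = v * w2
       \<and> w1 * w2 = - (w2 * w1) - 2 * h * u * w2
       \<and> w1 * w1 = - (2 * h * u * w1)
       \<and> w2 * w2 = 0
       \<and> u * v = v * u - 2 * h * u * w2
       \<and> Dh * w1 = w1 * Dh \<and> Dh * w2 = w2 * Dh \<and> Dh * u = u * Dh \<and> Dh * v = v * Dh
       \<and> Dhat * w1 = w1 * Dhat \<and> Dhat * w2 = w2 * Dhat
       \<and> Dhat * u = u * Dhat \<and> Dhat * v = v * Dhat"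
proof -
  interpret Gamma_algebra h a d \<beta> \<gamma> \<alpha> \<delta> b c ai di ci Dh Dhi
    by (rule Gamma_algebra.intro) (fact assms)+
  have entries: "w1 = Omega11" "u = Omega12" "w2 = Omega22" "v = Omega21" "Dhat = D_hat"
    using Omega Tinv Dhat_def by (simp_all add: Omega_defs D_hat_def)
  show ?thesis
    unfolding entries using Omega_relations Dh_D_hat_commute_Omega by blast
qed

end
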